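(* Let $(M,d)$ be a compact ultrametric space and $n\in\mathbb{N}$. The optimal codes of size $n$ in $(M,d)$ are exactly the sets consisting of $n$ representatives of distinct parts of $\Pi(\delta)$, where $\delta=\max\{r:|\Pi(r)|\geq n\}$.
   Context: An ultrametric space satisfies $d(x,z)\leq\max(d(x,y),d(y,z))$ for all $x,y,z$. For $r>0$, $\Pi(r)$ denotes the partition of $M$ into open balls $B(x,r)=\{y:d(x,y)<r\}$ (any two such balls are equal or disjoint; in a compact space $\Pi(r)$ is finite). For finite $C\subseteq M$, $\delta(C)$ is the minimum distance between distinct points; an optimal code of size $n$ is an $n$-element subset maximizing $\delta$. *)

theory Defs
  imports "HOL-Analysis.Analysis"
begin

definition ultrametric_on :: "'a::metric_space set \<Rightarrow> bool" where
  "ultrametric_on M \<longleftrightarrow>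
     (\<forall>x\<in>M. \<forall>y\<in>M. \<forall>z\<in>M. dist x z \<le> max (dist x y) (dist y z))"

definition mball :: "'a::metric_space set \<Rightarrow> 'a \<Rightarrow> real \<Rightarrow> 'a set" where
  "mball M x r = {y\<in>M. dist x y < r}"

definition ball_partition :: "'a::metric_space set \<Rightarrow> real \<Rightarrow> 'a set set" where
  "ball_partition M r = (\<lambda>x. mball M x r) ` M"

definition min_dist :: "'a::metric_space set \<Rightarrow> real" where
  "min_dist C = Min {dist x y | x y. x \<in> C \<and> y \<in> C \<and> x \<noteq> y}"

definition optimal_code :: "'a::metric_space set \<Rightarrow> nat \<Rightarrow> 'a set \<Rightarrow> bool" where
  "optimal_code M n C \<longleftrightarrow> C \<subseteq> M \<and> finite C \<and> card C = n \<and>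
     (\<forall>C'. C' \<subseteq> M \<and> finite C' \<and> card C' = n \<longrightarrow> min_dist C' \<le> min_dist C)"

definition critical_radius :: "'a::metric_space set \<Rightarrow> nat \<Rightarrow> real" where
  "critical_radius M n = (GREATEST r. r > 0 \<and> card (ball_partition M r) \<ge> n)"

end

theory Submission
  imports Defs
begin

text \<open>Two points lie in a common ball of radius r exactly when their distance is below r, and the
  partition \<open>\<Pi>(r)\<close> is finite by compactness. Hence \<open>|\<Pi>(r)| \<ge> n\<close> holds exactly when there are n
  points at mutual distance at least r, and every code of size n is \<open>\<delta>(C)\<close>-separated; so the
  optimal value of \<open>\<delta>\<close> is the largest r with \<open>|\<Pi>(r)| \<ge> n\<close>, and the optimal codes are the
  codes whose points lie in distinct parts of \<open>\<Pi>\<close> at that radius. That this largest r exists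
  follows from a gap phenomenon: every ball is compact, so the distances below s are bounded by some
  t < s, and \<open>\<Pi>\<close> is constant on the interval (t, s].\<close>

definition separated :: "real \<Rightarrow> 'a::metric_space set \<Rightarrow> bool" where
  "separated r C \<longleftrightarrow> (\<forall>x\<in>C. \<forall>y\<in>C. x \<noteq> y \<longrightarrow> r \<le> dist x y)"

lemma ultrametric_dist_less:
  assumes "ultrametric_on M" "x \<in> M" "y \<in> M" "z \<in> M" "dist x y < r" "dist x z < r"
  shows "dist y z < r"
proof -
  have "dist y z \<le> max (dist y x) (dist x z)"
    using assms(1-4) unfolding ultrametric_on_def by blast
  then show ?thesis using assms(5,6) by (simp add: dist_commute)
qed

lemma ultrametric_mball_eq_iff:
  assumes "ultrametric_on M" "x \<in> M" "y \<in> M" "r > 0"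
  shows "mball M x r = mball M y r \<longleftrightarrow> dist x y < r"
proof
  assume "mball M x r = mball M y r"
  moreover have "y \<in> mball M y r" using assms(3,4) by (simp add: mball_def)
  ultimately have "y \<in> mball M x r" by simp
  then show "dist x y < r" by (simp add: mball_def)
next
  assume "dist x y < r"
  then show "mball M x r = mball M y r"
    using ultrametric_dist_less[OF assms(1,2,3)] ultrametric_dist_less[OF assms(1,3,2)]
    by (auto simp: mball_def dist_commute)
qed

lemma compact_mball:
  assumes "compact M" "ultrametric_on M" "x \<in> M" "r > 0"
  shows "compact (mball M x r)"
proof -
  define U where "U = (\<Union>z\<in>{z\<in>M. r \<le> dist x z}. ball z r)"
  have "y \<in> U \<longleftrightarrow> r \<le> dist x y" if y: "y \<in> M" for y
  proof
    assume "y \<in> U"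
    then obtain z where "z \<in> M" "r \<le> dist x z" "dist z y < r" by (auto simp: U_def)
    then show "r \<le> dist x y"
      using ultrametric_dist_less[OF assms(2) y assms(3)] by (metis dist_commute not_le)
  next
    assume "r \<le> dist x y"
    then show "y \<in> U" unfolding U_def using y assms(4) by (intro UN_I[of y]) auto
  qed
  then have "mball M x r = M - U" by (auto simp: mball_def not_le)
  moreover have "open U" unfolding U_def by auto
  ultimately show ?thesis using assms(1) by (simp add: compact_diff)
qed

lemma finite_ball_partition:
  assumes "compact M" "ultrametric_on M" "r > 0"
  shows "finite (ball_partition M r)"
proof -
  obtain F where F: "F \<subseteq> M" "finite F" "M \<subseteq> (\<Union>x\<in>F. ball x r)"
    using compactE_image[OF assms(1), of M "\<lambda>x. ball x r"] assms(3) by force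
  have "ball_partition M r \<subseteq> (\<lambda>x. mball M x r) ` F"
  proof
    fix B assume "B \<in> ball_partition M r"
    then obtain z where z: "z \<in> M" "B = mball M z r" by (auto simp: ball_partition_def)
    then obtain x where "x \<in> F" "dist x z < r" using F(3) by auto
    then show "B \<in> (\<lambda>x. mball M x r) ` F"
      using ultrametric_mball_eq_iff[OF assms(2) _ z(1) assms(3), of x] F(1) z by auto
  qed
  then show ?thesis using F(2) finite_subset by blast
qed

lemma ultrametric_dist_gap:
  assumes "compact M" "ultrametric_on M" "s > 0"
  obtains t where "t < s" "\<And>y z. y \<in> M \<Longrightarrow> z \<in> M \<Longrightarrow> dist y z < s \<Longrightarrow> dist y z \<le> t"
proof -
  define t where "t = Max (insert 0 (diameter ` ball_partition M s))"
  have fin: "finite (insert 0 (diameter ` ball_partition M s))"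
    using finite_ball_partition[OF assms] by simp
  have "diameter B < s" if B: "B \<in> ball_partition M s" for B
  proof -
    obtain x where x: "x \<in> M" "B = mball M x s" using B by (auto simp: ball_partition_def)
    then have "compact B" "B \<noteq> {}" using compact_mball[OF assms(1,2)] assms(3) by (auto simp: mball_def)
    then obtain y z where yz: "y \<in> B" "z \<in> B" "dist y z = diameter B"
      using diameter_compact_attained by blast
    from yz(1,2) have "y \<in> M" "z \<in> M" "dist x y < s" "dist x z < s"
      unfolding x(2) mball_def by auto
    then have "dist y z < s" by (rule ultrametric_dist_less[OF assms(2) x(1)])
    then show ?thesis using yz(3) by simp
  qed
  then have "t < s" unfolding t_def using fin assms(3) by (subst Max_less_iff) auto
  moreover have "dist y z \<le> t" if "y \<in> M" "z \<in> M" "dist y z < s" for y z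
  proof -
    have B: "mball M y s \<in> ball_partition M s" using that(1) by (simp add: ball_partition_def)
    have "dist y z \<le> diameter (mball M y s)"
      using that assms compact_mball[OF assms(1,2) that(1)]
      by (intro diameter_bounded_bound compact_imp_bounded) (auto simp: mball_def)
    also have "\<dots> \<le> t" unfolding t_def using fin B by (intro Max_ge) auto
    finally show ?thesis .
  qed
  ultimately show ?thesis by (rule that)
qed

lemma ball_partition_constant_below:
  assumes "compact M" "ultrametric_on M" "s > 0"
  obtains t where "t < s" "\<And>r. t < r \<Longrightarrow> r \<le> s \<Longrightarrow> ball_partition M r = ball_partition M s"
proof -
  obtain t where t: "t < s" "\<And>y z. y \<in> M \<Longrightarrow> z \<in> M \<Longrightarrow> dist y z < s \<Longrightarrow> dist y z \<le> t"
    using ultrametric_dist_gap[OF assms] by metis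
  have mball_eq: "mball M x r = mball M x s" if x: "x \<in> M" and r: "t < r" "r \<le> s" for x r
  proof -
    have "dist x y < r \<longleftrightarrow> dist x y < s" if "y \<in> M" for y
      using t(2)[OF x that] r by (cases "dist x y < s") auto
    then show ?thesis unfolding mball_def by blast
  qed
  have "ball_partition M r = ball_partition M s" if "t < r" "r \<le> s" for r
    unfolding ball_partition_def using mball_eq[OF _ that] by (intro image_cong) auto
  with t(1) show ?thesis by (rule that)
qed

lemma separated_iff_mball_distinct:
  assumes "ultrametric_on M" "C \<subseteq> M" "r > 0"
  shows "separated r C \<longleftrightarrow> (\<forall>x\<in>C. \<forall>y\<in>C. x \<noteq> y \<longrightarrow> mball M x r \<noteq> mball M y r)"
proof -
  have "r \<le> dist x y \<longleftrightarrow> mball M x r \<noteq> mball M y r" if "x \<in> C" "y \<in> C" for x y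
  proof -
    have "mball M x r = mball M y r \<longleftrightarrow> dist x y < r"
      using ultrametric_mball_eq_iff[OF assms(1) _ _ assms(3)] that assms(2) by blast
    then show ?thesis by (simp add: not_less)
  qed
  then show ?thesis unfolding separated_def by blast
qed

lemma card_ball_partition_ge_iff:
  assumes "compact M" "ultrametric_on M" "r > 0"
  shows "n \<le> card (ball_partition M r) \<longleftrightarrow>
    (\<exists>C\<subseteq>M. finite C \<and> card C = n \<and> separated r C)"
proof
  assume "n \<le> card (ball_partition M r)"
  then obtain P where P: "P \<subseteq> ball_partition M r" "card P = n" "finite P"
    by (meson obtain_subset_with_card_n)
  then obtain C where C: "C \<subseteq> M" "inj_on (\<lambda>x. mball M x r) C" "P = (\<lambda>x. mball M x r) ` C"
    unfolding ball_partition_def subset_image_inj by blast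
  then have "finite C" "card C = n" using P(2,3) finite_image_iff[OF C(2)] card_image[OF C(2)] by auto
  moreover have "separated r C"
    using separated_iff_mball_distinct[OF assms(2) C(1) assms(3)] C(2) by (auto dest: inj_onD)
  ultimately show "\<exists>C\<subseteq>M. finite C \<and> card C = n \<and> separated r C" using C(1) by blast
next
  assume "\<exists>C\<subseteq>M. finite C \<and> card C = n \<and> separated r C"
  then obtain C where C: "C \<subseteq> M" "card C = n" "separated r C" by blast
  have "inj_on (\<lambda>x. mball M x r) C"
    using separated_iff_mball_distinct[OF assms(2) C(1) assms(3)] C(3) by (meson inj_onI)
  moreover have "(\<lambda>x. mball M x r) ` C \<subseteq> ball_partition M r"
    using C(1) by (auto simp: ball_partition_def)
  ultimately show "n \<le> card (ball_partition M r)"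
    using card_inj_on_le finite_ball_partition[OF assms] C(2) by blast
qed

lemma
  assumes "finite C" "2 \<le> card C"
  shows min_dist_pos: "0 < min_dist C"
    and le_min_dist_iff_separated: "r \<le> min_dist C \<longleftrightarrow> separated r C"
proof -
  define D where "D = {dist x y | x y. x \<in> C \<and> y \<in> C \<and> x \<noteq> y}"
  have "D \<subseteq> case_prod dist ` (C \<times> C)" unfolding D_def by auto
  then have "finite D" using assms(1) finite_subset by blast
  moreover have "D \<noteq> {}"
    using assms card_le_Suc0_iff_eq[OF assms(1)] unfolding D_def by fastforce
  ultimately have "Min D \<in> D" "r \<le> Min D \<longleftrightarrow> (\<forall>d\<in>D. r \<le> d)" by simp_all
  then show "0 < min_dist C" "r \<le> min_dist C \<longleftrightarrow> separated r C"
    unfolding min_dist_def D_def[symmetric] by (auto simp: D_def separated_def)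
qed

text \<open>For codes of size at most one the minimum is taken over the empty set; its value is
  unspecified, but the same for all such codes.\<close>

lemma min_dist_card_le_one:
  assumes "finite C" "card C \<le> 1"
  shows "min_dist C = Min {}"
proof -
  have "\<forall>x\<in>C. \<forall>y\<in>C. x = y" using assms card_le_Suc0_iff_eq by auto
  then have "{dist x y | x y. x \<in> C \<and> y \<in> C \<and> x \<noteq> y} = {}" by blast
  then show ?thesis unfolding min_dist_def by (rule arg_cong)
qed

lemma optimal_code_card_le_one:
  assumes "n \<le> 1"
  shows "optimal_code M n C \<longleftrightarrow> C \<subseteq> M \<and> finite C \<and> card C = n"
proof
  assume "optimal_code M n C"
  then show "C \<subseteq> M \<and> finite C \<and> card C = n" by (simp add: optimal_code_def)
next
  assume "C \<subseteq> M \<and> finite C \<and> card C = n"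
  then have C: "C \<subseteq> M" "finite C" "card C = n" by simp_all
  then have "min_dist C' \<le> min_dist C" if "finite C'" "card C' = n" for C'
    using min_dist_card_le_one[of C'] min_dist_card_le_one[of C] that assms by simp
  then show "optimal_code M n C" using C unfolding optimal_code_def by blast
qed

lemma card_le_card_ball_partition_min_dist:
  assumes "compact M" "ultrametric_on M" "C \<subseteq> M" "finite C" "2 \<le> card C"
  shows "card C \<le> card (ball_partition M (min_dist C))"
  using card_ball_partition_ge_iff[OF assms(1,2) min_dist_pos[OF assms(4,5)]] assms(3,4)
    le_min_dist_iff_separated[OF assms(4,5)] by blast

lemma radius_le_diameter_if_card_ball_partition_ge:
  assumes "compact M" "ultrametric_on M" "2 \<le> n" "r > 0" "n \<le> card (ball_partition M r)"
  shows "r \<le> diameter M"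
proof -
  obtain C where C: "C \<subseteq> M" "finite C" "card C = n" "separated r C"
    using card_ball_partition_ge_iff[OF assms(1,2,4)] assms(5) by blast
  then obtain a b where ab: "a \<in> C" "b \<in> C" "a \<noteq> b"
    using assms(3) card_le_Suc0_iff_eq[OF C(2)] by fastforce
  then have "r \<le> dist a b" using C(4) by (simp add: separated_def)
  also have "\<dots> \<le> diameter M"
    using ab C(1) compact_imp_bounded[OF assms(1)] by (intro diameter_bounded_bound) auto
  finally show ?thesis .
qed

lemma max_radius_with_card_ball_partition_ge:
  assumes "compact M" "ultrametric_on M" "2 \<le> n" "r0 > 0" "n \<le> card (ball_partition M r0)"
  obtains s where "s > 0" "n \<le> card (ball_partition M s)"
    "\<And>r. r > 0 \<Longrightarrow> n \<le> card (ball_partition M r) \<Longrightarrow> r \<le> s"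
proof -
  define S where "S = {r. r > 0 \<and> n \<le> card (ball_partition M r)}"
  have S_iff: "r \<in> S \<longleftrightarrow> r > 0 \<and> n \<le> card (ball_partition M r)" for r
    by (simp add: S_def)
  have "bdd_above S"
    using radius_le_diameter_if_card_ball_partition_ge[OF assms(1-3)]
    by (intro bdd_aboveI[of _ "diameter M"]) (auto simp: S_iff)
  then have upper: "r \<le> Sup S" if "r \<in> S" for r using that by (rule cSup_upper[rotated])
  have "r0 \<in> S" using assms(4,5) by (simp add: S_iff)
  then have "Sup S > 0" using upper assms(4) by force
  then obtain t where t: "t < Sup S"
    and const: "\<And>r. t < r \<Longrightarrow> r \<le> Sup S \<Longrightarrow> ball_partition M r = ball_partition M (Sup S)"
    using ball_partition_constant_below[OF assms(1,2)] by blast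
  obtain r where r: "r \<in> S" "t < r" using less_cSupE[OF t] \<open>r0 \<in> S\<close> by blast
  have "ball_partition M r = ball_partition M (Sup S)" using const[OF r(2) upper[OF r(1)]] .
  then have "Sup S \<in> S" using r(1) \<open>Sup S > 0\<close> by (simp add: S_iff)
  then show ?thesis using upper by (intro that[of "Sup S"]) (simp_all add: S_iff)
qed

lemma critical_radius:
  assumes "compact M" "ultrametric_on M" "2 \<le> n" "C0 \<subseteq> M" "finite C0" "card C0 = n"
  shows critical_radius_pos: "critical_radius M n > 0"
    and card_ball_partition_critical_radius: "n \<le> card (ball_partition M (critical_radius M n))"
    and min_dist_le_critical_radius:
      "\<And>C. C \<subseteq> M \<Longrightarrow> finite C \<Longrightarrow> card C = n \<Longrightarrow> min_dist C \<le> critical_radius M n"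
proof -
  have code_radius: "0 < min_dist C" "n \<le> card (ball_partition M (min_dist C))"
    if "C \<subseteq> M" "finite C" "card C = n" for C
    using min_dist_pos[OF that(2)] card_le_card_ball_partition_min_dist[OF assms(1,2) that(1,2)]
      that(3) assms(3) by simp_all
  obtain s where s: "s > 0" "n \<le> card (ball_partition M s)"
    "\<And>r. r > 0 \<Longrightarrow> n \<le> card (ball_partition M r) \<Longrightarrow> r \<le> s"
    using max_radius_with_card_ball_partition_ge[OF assms(1-3) code_radius[OF assms(4-6)]] by blast
  have crit: "critical_radius M n = s"
    unfolding critical_radius_def by (rule Greatest_equality) (use s in auto)
  show "critical_radius M n > 0" using s(1) crit by simp
  show "n \<le> card (ball_partition M (critical_radius M n))" using s(2) crit by simp
  show "min_dist C \<le> critical_radius M n" if "C \<subseteq> M" "finite C" "card C = n" for C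
    using s(3)[OF code_radius[OF that]] crit by simp
qed

lemma optimal_code_iff_critical_radius_le_min_dist:
  assumes "compact M" "ultrametric_on M" "2 \<le> n"
  shows "optimal_code M n C \<longleftrightarrow>
    C \<subseteq> M \<and> finite C \<and> card C = n \<and> critical_radius M n \<le> min_dist C"
proof (cases "C \<subseteq> M \<and> finite C \<and> card C = n")
  case False
  then show ?thesis unfolding optimal_code_def by blast
next
  case True
  then have C: "C \<subseteq> M" "finite C" "card C = n" by simp_all
  obtain Cs where Cs: "Cs \<subseteq> M" "finite Cs" "card Cs = n" "separated (critical_radius M n) Cs"
    using card_ball_partition_ge_iff[OF assms(1,2) critical_radius_pos[OF assms C]]
      card_ball_partition_critical_radius[OF assms C] by blast
  then have Cs_bound: "critical_radius M n \<le> min_dist Cs"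
    using le_min_dist_iff_separated assms(3) by auto
  have dominates_iff: "(\<forall>C'. C' \<subseteq> M \<and> finite C' \<and> card C' = n \<longrightarrow> min_dist C' \<le> min_dist C)
    \<longleftrightarrow> critical_radius M n \<le> min_dist C"
  proof
    assume "\<forall>C'. C' \<subseteq> M \<and> finite C' \<and> card C' = n \<longrightarrow> min_dist C' \<le> min_dist C"
    then have "min_dist Cs \<le> min_dist C" using Cs(1-3) by blast
    then show "critical_radius M n \<le> min_dist C" using Cs_bound by linarith
  next
    assume C_bound: "critical_radius M n \<le> min_dist C"
    show "\<forall>C'. C' \<subseteq> M \<and> finite C' \<and> card C' = n \<longrightarrow> min_dist C' \<le> min_dist C"
    proof (intro allI impI)
      fix C' assume "C' \<subseteq> M \<and> finite C' \<and> card C' = n"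
      then have "min_dist C' \<le> critical_radius M n"
        using min_dist_le_critical_radius[OF assms C] by blast
      then show "min_dist C' \<le> min_dist C" using C_bound by linarith
    qed
  qed
  show ?thesis by (simp only: optimal_code_def dominates_iff)
qed

lemma critical_radius_le_min_dist_iff_mball_distinct:
  assumes "compact M" "ultrametric_on M" "2 \<le> n" "C \<subseteq> M" "finite C" "card C = n"
  shows "critical_radius M n \<le> min_dist C \<longleftrightarrow>
    (\<forall>x\<in>C. \<forall>y\<in>C. x \<noteq> y \<longrightarrow> mball M x (critical_radius M n) \<noteq> mball M y (critical_radius M n))"
  using le_min_dist_iff_separated[OF assms(5)]
    separated_iff_mball_distinct[OF assms(2,4) critical_radius_pos[OF assms]] assms(3,6)
  by simp

theorem lemma4p17:
  fixes M :: "'a::metric_space set" and n :: nat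
  assumes "compact M" and "ultrametric_on M"
  shows "optimal_code M n C \<longleftrightarrow>
    (C \<subseteq> M \<and> finite C \<and> card C = n \<and>
     (\<forall>x\<in>C. \<forall>y\<in>C. x \<noteq> y \<longrightarrow>
        mball M x (critical_radius M n) \<noteq> mball M y (critical_radius M n)))"
proof (cases "n \<le> 1")
  case True
  have "\<forall>x\<in>C. \<forall>y\<in>C. x \<noteq> y \<longrightarrow>
      mball M x (critical_radius M n) \<noteq> mball M y (critical_radius M n)"
    if "finite C" "card C = n"
    using card_le_Suc0_iff_eq[OF that(1)] that(2) True by simp
  then show ?thesis unfolding optimal_code_card_le_one[OF True] by auto
next
  case False
  then have "2 \<le> n" by simp
  show ?thesis
    unfolding optimal_code_iff_critical_radius_le_min_dist[OF assms \<open>2 \<le> n\<close>]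
    using critical_radius_le_min_dist_iff_mball_distinct[OF assms \<open>2 \<le> n\<close>]
    by (intro conj_cong refl)
qed

end
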